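(* Let $(\mathbb{C},P)$ be an extensional, cauchy-complete tripos with full comprehensions and strong power objects. Then $(\mathbb{C},P)$ has effective quotients. Explicitly, for an equivalence relation $\rho$ on $A$, the quotient $A/\rho$ may be taken to be the domain of the comprehension $\lfloor\sigma\rfloor$ of $\sigma=\exists_{\pi_2}\big(\in_A\wedge\forall_{\langle\pi_1,\pi_3\rangle}(\langle\pi_1,\pi_2\rangle^*\rho\leftrightarrow\langle\pi_2,\pi_3\rangle^*\in_A)\big)\in P(\mathbb{P}A)$ (a formula expressing that an element of $\mathbb{P}A$ is the $\rho$-class of some element of $A$).
   Context: A tripos $(\mathbb{C},P)$: $\mathbb{C}$ non-empty with binary products, $P:\mathbb{C}^{op}\to$ Heyting algebras, reindexings $f^*$ Heyting homomorphisms with left adjoints $\exists_f$ (Beck–Chevalley, Frobenius) and right adjoints $\forall_f$ (Beck–Chevalley), and weak power objects ($\mathbb{P}X$, $\in_X\in P(X\times\mathbb{P}X)$ with every $\gamma\in P(X\times Y)$ of the form $(id_X\times\{\gamma\})^*\in_X$). $\delta_A=\exists_{\langle id,id\rangle}\top_A$. Strong power objects: every $A$ has a weak power object $\mathbb{P}A$ with $\delta_{\mathbb{P}A}=\forall_{\langle\pi_2,\pi_3\rangle}(\langle\pi_1,\pi_2\rangle^*\in_A\leftrightarrow\langle\pi_1,\pi_3\rangle^*\in_A)$. Extensional: $f=g$ iff $\top\le\langle f,g\rangle^*\delta$. Cauchy-complete: every $F\in P(Y\times A)$ with $\top_Y\le\exists_{\pi_1}F$ and $\langle\pi_1,\pi_2\rangle^*F\wedge\langle\pi_1,\pi_3\rangle^*F\le\langle\pi_2,\pi_3\rangle^*\delta_A$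 equals $(f\times id_A)^*\delta_A$ for some $f:Y\to A$. Full comprehension of $\alpha\in P(A)$: $\lfloor\alpha\rfloor:X\to A$ with $\lfloor\alpha\rfloor^*\alpha=\top$, universal among $f$ with $f^*\alpha=\top$, and $\lfloor\alpha\rfloor^*\alpha\le\lfloor\alpha\rfloor^*\beta$ iff $\alpha\le\beta$. Equivalence relation on $A$: $\rho\in P(A\times A)$, $\delta_A\le\rho$, symmetric and transitive internally. Effective quotient: $q:A\to A/\rho$ with $\rho=(q\times q)^*\delta_{A/\rho}$, universal among $f:A\to Y$ with $\rho\le(f\times f)^*\delta_Y$. *)

theory Defs
  imports Main
begin

text \<open>Objects of the base category are the elements of type 'o, arrows the elements
of type 'm; the fibre P(X) is the carrier set t_P T X of elements of type 'p, ordered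
by t_le T X, with Heyting operations indexed by the object X.  Reindexing f^* is
t_rx T f, its left adjoint is t_ex T f and its right adjoint t_al T f.\<close>

record ('o, 'm, 'p) tripos_data =
  t_dom :: "'m \<Rightarrow> 'o"
  t_cod :: "'m \<Rightarrow> 'o"
  t_id :: "'o \<Rightarrow> 'm"
  t_comp :: "'m \<Rightarrow> 'm \<Rightarrow> 'm"   (* t_comp T g f = g o f *)
  t_prd :: "'o \<Rightarrow> 'o \<Rightarrow> 'o"
  t_pr1 :: "'o \<Rightarrow> 'o \<Rightarrow> 'm"
  t_pr2 :: "'o \<Rightarrow> 'o \<Rightarrow> 'm"
  t_pair :: "'m \<Rightarrow> 'm \<Rightarrow> 'm"
  t_P :: "'o \<Rightarrow> 'p set"
  t_le :: "'o \<Rightarrow> 'p \<Rightarrow> 'p \<Rightarrow> bool"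
  t_top :: "'o \<Rightarrow> 'p"
  t_bot :: "'o \<Rightarrow> 'p"
  t_meet :: "'o \<Rightarrow> 'p \<Rightarrow> 'p \<Rightarrow> 'p"
  t_join :: "'o \<Rightarrow> 'p \<Rightarrow> 'p \<Rightarrow> 'p"
  t_imp :: "'o \<Rightarrow> 'p \<Rightarrow> 'p \<Rightarrow> 'p"
  t_rx :: "'m \<Rightarrow> 'p \<Rightarrow> 'p"
  t_ex :: "'m \<Rightarrow> 'p \<Rightarrow> 'p"
  t_al :: "'m \<Rightarrow> 'p \<Rightarrow> 'p"

definition hom :: "('o,'m,'p) tripos_data \<Rightarrow> 'm \<Rightarrow> 'o \<Rightarrow> 'o \<Rightarrow> bool" where
  "hom T f X Y \<longleftrightarrow> t_dom T f = X \<and> t_cod T f = Y"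

definition is_category :: "('o,'m,'p) tripos_data \<Rightarrow> bool" where
  "is_category T \<longleftrightarrow>
     (\<forall>X. hom T (t_id T X) X X) \<and>
     (\<forall>f g X Y Z. hom T f X Y \<longrightarrow> hom T g Y Z \<longrightarrow> hom T (t_comp T g f) X Z) \<and>
     (\<forall>f. t_comp T (t_id T (t_cod T f)) f = f \<and> t_comp T f (t_id T (t_dom T f)) = f) \<and>
     (\<forall>f g h. t_cod T f = t_dom T g \<longrightarrow> t_cod T g = t_dom T h \<longrightarrow>
        t_comp T h (t_comp T g f) = t_comp T (t_comp T h g) f)"

definition has_binary_products :: "('o,'m,'p) tripos_data \<Rightarrow> bool" where
  "has_binary_products T \<longleftrightarrow>
     (\<forall>A B. hom T (t_pr1 T A B) (t_prd T A B) A \<and> hom T (t_pr2 T A B) (t_prd T A B) B \<and>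
       (\<forall>Z f g. hom T f Z A \<longrightarrow> hom T g Z B \<longrightarrow>
          hom T (t_pair T f g) Z (t_prd T A B) \<and>
          t_comp T (t_pr1 T A B) (t_pair T f g) = f \<and>
          t_comp T (t_pr2 T A B) (t_pair T f g) = g \<and>
          (\<forall>h. hom T h Z (t_prd T A B) \<longrightarrow> t_comp T (t_pr1 T A B) h = f \<longrightarrow>
               t_comp T (t_pr2 T A B) h = g \<longrightarrow> h = t_pair T f g)))"

definition cross :: "('o,'m,'p) tripos_data \<Rightarrow> 'm \<Rightarrow> 'm \<Rightarrow> 'm" where
  "cross T f g = t_pair T (t_comp T f (t_pr1 T (t_dom T f) (t_dom T g)))
                           (t_comp T g (t_pr2 T (t_dom T f) (t_dom T g)))"

definition prd3 :: "('o,'m,'p) tripos_data \<Rightarrow> 'o \<Rightarrow> 'o \<Rightarrow> 'o \<Rightarrow> 'o" where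
  "prd3 T X Y Z = t_prd T (t_prd T X Y) Z"
definition q1 :: "('o,'m,'p) tripos_data \<Rightarrow> 'o \<Rightarrow> 'o \<Rightarrow> 'o \<Rightarrow> 'm" where
  "q1 T X Y Z = t_comp T (t_pr1 T X Y) (t_pr1 T (t_prd T X Y) Z)"
definition q2 :: "('o,'m,'p) tripos_data \<Rightarrow> 'o \<Rightarrow> 'o \<Rightarrow> 'o \<Rightarrow> 'm" where
  "q2 T X Y Z = t_comp T (t_pr2 T X Y) (t_pr1 T (t_prd T X Y) Z)"
definition q3 :: "('o,'m,'p) tripos_data \<Rightarrow> 'o \<Rightarrow> 'o \<Rightarrow> 'o \<Rightarrow> 'm" where
  "q3 T X Y Z = t_pr2 T (t_prd T X Y) Z"

definition is_heyting :: "('o,'m,'p) tripos_data \<Rightarrow> 'o \<Rightarrow> bool" where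
  "is_heyting T X \<longleftrightarrow>
     (\<forall>a\<in>t_P T X. t_le T X a a) \<and>
     (\<forall>a\<in>t_P T X. \<forall>b\<in>t_P T X. t_le T X a b \<longrightarrow> t_le T X b a \<longrightarrow> a = b) \<and>
     (\<forall>a\<in>t_P T X. \<forall>b\<in>t_P T X. \<forall>c\<in>t_P T X. t_le T X a b \<longrightarrow> t_le T X b c \<longrightarrow> t_le T X a c) \<and>
     t_top T X \<in> t_P T X \<and> t_bot T X \<in> t_P T X \<and>
     (\<forall>a\<in>t_P T X. \<forall>b\<in>t_P T X. t_meet T X a b \<in> t_P T X \<and> t_join T X a b \<in> t_P T X \<and>
        t_imp T X a b \<in> t_P T X) \<and>
     (\<forall>a\<in>t_P T X. t_le T X a (t_top T X) \<and> t_le T X (t_bot T X) a) \<and>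
     (\<forall>a\<in>t_P T X. \<forall>b\<in>t_P T X. \<forall>c\<in>t_P T X.
        (t_le T X c (t_meet T X a b) \<longleftrightarrow> t_le T X c a \<and> t_le T X c b) \<and>
        (t_le T X (t_join T X a b) c \<longleftrightarrow> t_le T X a c \<and> t_le T X b c) \<and>
        (t_le T X c (t_imp T X a b) \<longleftrightarrow> t_le T X (t_meet T X c a) b))"

definition is_pullback :: "('o,'m,'p) tripos_data \<Rightarrow> 'm \<Rightarrow> 'm \<Rightarrow> 'm \<Rightarrow> 'm \<Rightarrow> bool" where
  "is_pullback T f g p q \<longleftrightarrow>
     t_cod T f = t_cod T g \<and> t_cod T p = t_dom T f \<and> t_cod T q = t_dom T g \<and>
     t_dom T p = t_dom T q \<and> t_comp T f p = t_comp T g q \<and>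
     (\<forall>u v. t_cod T u = t_dom T f \<longrightarrow> t_cod T v = t_dom T g \<longrightarrow> t_dom T u = t_dom T v \<longrightarrow>
        t_comp T f u = t_comp T g v \<longrightarrow>
        (\<exists>!w. hom T w (t_dom T u) (t_dom T p) \<and> t_comp T p w = u \<and> t_comp T q w = v))"

text \<open>Weak power object (PA, m) of A, with m = \<in>_A \<in> P(A \<times> PA).\<close>
definition weak_power :: "('o,'m,'p) tripos_data \<Rightarrow> 'o \<Rightarrow> 'o \<Rightarrow> 'p \<Rightarrow> bool" where
  "weak_power T A PA m \<longleftrightarrow> m \<in> t_P T (t_prd T A PA) \<and>
     (\<forall>Y. \<forall>\<gamma>\<in>t_P T (t_prd T A Y). \<exists>c. hom T c Y PA \<and> \<gamma> = t_rx T (cross T (t_id T A) c) m)"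

definition is_tripos :: "('o,'m,'p) tripos_data \<Rightarrow> bool" where
  "is_tripos T \<longleftrightarrow> is_category T \<and> has_binary_products T \<and> (\<forall>X. is_heyting T X) \<and>
     \<comment> \<open>P is a functor into Heyting algebras; reindexings are Heyting homomorphisms\<close>
     (\<forall>X. \<forall>a\<in>t_P T X. t_rx T (t_id T X) a = a) \<and>
     (\<forall>f g. t_cod T f = t_dom T g \<longrightarrow> (\<forall>a\<in>t_P T (t_cod T g).
        t_rx T (t_comp T g f) a = t_rx T f (t_rx T g a))) \<and>
     (\<forall>f X Y. hom T f X Y \<longrightarrow>
        (\<forall>a\<in>t_P T Y. t_rx T f a \<in> t_P T X) \<and>
        t_rx T f (t_top T Y) = t_top T X \<and> t_rx T f (t_bot T Y) = t_bot T X \<and>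
        (\<forall>a\<in>t_P T Y. \<forall>b\<in>t_P T Y.
           t_rx T f (t_meet T Y a b) = t_meet T X (t_rx T f a) (t_rx T f b) \<and>
           t_rx T f (t_join T Y a b) = t_join T X (t_rx T f a) (t_rx T f b) \<and>
           t_rx T f (t_imp T Y a b) = t_imp T X (t_rx T f a) (t_rx T f b))) \<and>
     \<comment> \<open>left and right adjoints, Frobenius\<close>
     (\<forall>f X Y. hom T f X Y \<longrightarrow>
        (\<forall>a\<in>t_P T X. t_ex T f a \<in> t_P T Y \<and> t_al T f a \<in> t_P T Y) \<and>
        (\<forall>a\<in>t_P T X. \<forall>b\<in>t_P T Y.
           (t_le T Y (t_ex T f a) b \<longleftrightarrow> t_le T X a (t_rx T f b)) \<and>
           (t_le T X (t_rx T f b) a \<longleftrightarrow> t_le T Y b (t_al T f a)) \<and>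
           t_ex T f (t_meet T X a (t_rx T f b)) = t_meet T Y (t_ex T f a) b)) \<and>
     \<comment> \<open>Beck--Chevalley for all pullback squares  f o p = g o q\<close>
     (\<forall>f g p q. is_pullback T f g p q \<longrightarrow> (\<forall>a\<in>t_P T (t_dom T f).
        t_rx T g (t_ex T f a) = t_ex T q (t_rx T p a) \<and>
        t_rx T g (t_al T f a) = t_al T q (t_rx T p a))) \<and>
     \<comment> \<open>weak power objects\<close>
     (\<forall>A. \<exists>PA m. weak_power T A PA m)"

definition delta :: "('o,'m,'p) tripos_data \<Rightarrow> 'o \<Rightarrow> 'p" where
  "delta T A = t_ex T (t_pair T (t_id T A) (t_id T A)) (t_top T A)"

definition iff :: "('o,'m,'p) tripos_data \<Rightarrow> 'o \<Rightarrow> 'p \<Rightarrow> 'p \<Rightarrow> 'p" where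
  "iff T X a b = t_meet T X (t_imp T X a b) (t_imp T X b a)"

definition strong_power :: "('o,'m,'p) tripos_data \<Rightarrow> 'o \<Rightarrow> 'o \<Rightarrow> 'p \<Rightarrow> bool" where
  "strong_power T A PA m \<longleftrightarrow> weak_power T A PA m \<and>
     delta T PA = t_al T (t_pair T (q2 T A PA PA) (q3 T A PA PA))
        (iff T (prd3 T A PA PA)
           (t_rx T (t_pair T (q1 T A PA PA) (q2 T A PA PA)) m)
           (t_rx T (t_pair T (q1 T A PA PA) (q3 T A PA PA)) m))"

definition has_strong_power_objects :: "('o,'m,'p) tripos_data \<Rightarrow> bool" where
  "has_strong_power_objects T \<longleftrightarrow> (\<forall>A. \<exists>PA m. strong_power T A PA m)"

definition extensional :: "('o,'m,'p) tripos_data \<Rightarrow> bool" where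
  "extensional T \<longleftrightarrow> (\<forall>f g Y A. hom T f Y A \<longrightarrow> hom T g Y A \<longrightarrow>
     (f = g \<longleftrightarrow> t_le T Y (t_top T Y) (t_rx T (t_pair T f g) (delta T A))))"

definition cauchy_complete :: "('o,'m,'p) tripos_data \<Rightarrow> bool" where
  "cauchy_complete T \<longleftrightarrow> (\<forall>Y A. \<forall>F\<in>t_P T (t_prd T Y A).
     t_le T Y (t_top T Y) (t_ex T (t_pr1 T Y A) F) \<and>
     t_le T (prd3 T Y A A)
       (t_meet T (prd3 T Y A A) (t_rx T (t_pair T (q1 T Y A A) (q2 T Y A A)) F)
                                (t_rx T (t_pair T (q1 T Y A A) (q3 T Y A A)) F))
       (t_rx T (t_pair T (q2 T Y A A) (q3 T Y A A)) (delta T A))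
     \<longrightarrow> (\<exists>f. hom T f Y A \<and> F = t_rx T (cross T f (t_id T A)) (delta T A)))"

definition full_comprehension :: "('o,'m,'p) tripos_data \<Rightarrow> 'o \<Rightarrow> 'p \<Rightarrow> 'm \<Rightarrow> bool" where
  "full_comprehension T A \<alpha> c \<longleftrightarrow> t_cod T c = A \<and>
     t_rx T c \<alpha> = t_top T (t_dom T c) \<and>
     (\<forall>f. t_cod T f = A \<longrightarrow> t_rx T f \<alpha> = t_top T (t_dom T f) \<longrightarrow>
        (\<exists>!h. hom T h (t_dom T f) (t_dom T c) \<and> t_comp T c h = f)) \<and>
     (\<forall>\<beta>\<in>t_P T A. t_le T (t_dom T c) (t_rx T c \<alpha>) (t_rx T c \<beta>) \<longleftrightarrow> t_le T A \<alpha> \<beta>)"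

definition has_full_comprehensions :: "('o,'m,'p) tripos_data \<Rightarrow> bool" where
  "has_full_comprehensions T \<longleftrightarrow> (\<forall>A. \<forall>\<alpha>\<in>t_P T A. \<exists>c. full_comprehension T A \<alpha> c)"

definition equiv_rel :: "('o,'m,'p) tripos_data \<Rightarrow> 'o \<Rightarrow> 'p \<Rightarrow> bool" where
  "equiv_rel T A \<rho> \<longleftrightarrow> \<rho> \<in> t_P T (t_prd T A A) \<and>
     t_le T (t_prd T A A) (delta T A) \<rho> \<and>
     t_le T (t_prd T A A) \<rho> (t_rx T (t_pair T (t_pr2 T A A) (t_pr1 T A A)) \<rho>) \<and>
     t_le T (prd3 T A A A)
       (t_meet T (prd3 T A A A) (t_rx T (t_pair T (q1 T A A A) (q2 T A A A)) \<rho>)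
                                (t_rx T (t_pair T (q2 T A A A) (q3 T A A A)) \<rho>))
       (t_rx T (t_pair T (q1 T A A A) (q3 T A A A)) \<rho>)"

definition effective_quotient :: "('o,'m,'p) tripos_data \<Rightarrow> 'o \<Rightarrow> 'p \<Rightarrow> 'm \<Rightarrow> bool" where
  "effective_quotient T A \<rho> q \<longleftrightarrow> t_dom T q = A \<and>
     \<rho> = t_rx T (cross T q q) (delta T (t_cod T q)) \<and>
     (\<forall>f. t_dom T f = A \<longrightarrow> t_le T (t_prd T A A) \<rho> (t_rx T (cross T f f) (delta T (t_cod T f))) \<longrightarrow>
        (\<exists>!h. hom T h (t_cod T q) (t_cod T f) \<and> t_comp T h q = f))"

definition has_effective_quotients :: "('o,'m,'p) tripos_data \<Rightarrow> bool" where
  "has_effective_quotients T \<longleftrightarrow> (\<forall>A \<rho>. equiv_rel T A \<rho> \<longrightarrow> (\<exists>q. effective_quotient T A \<rho> q))"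

definition class_formula :: "('o,'m,'p) tripos_data \<Rightarrow> 'o \<Rightarrow> 'o \<Rightarrow> 'p \<Rightarrow> 'p \<Rightarrow> 'p" where
  "class_formula T A PA m \<rho> =
     t_ex T (t_pr2 T A PA)
       (t_meet T (t_prd T A PA) m
          (t_al T (t_pair T (q1 T A A PA) (q3 T A A PA))
             (iff T (prd3 T A A PA)
                (t_rx T (t_pair T (q1 T A A PA) (q2 T A A PA)) \<rho>)
                (t_rx T (t_pair T (q2 T A A PA) (q3 T A A PA)) m))))"

end

theory Submission
  imports Defs
begin

text \<open>We reason with generalized elements: \<open>\<phi> \<in> P(X)\<close> holds at \<open>k : Z \<rightarrow> X\<close>
  when \<open>\<top> \<le> k\<^sup>*\<phi>\<close>.  Full comprehensions make a predicate determined by the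
  generalized elements at which it holds, extensionality makes \<open>\<delta>\<close> hold exactly at
  equal pairs, and Beck--Chevalley along product projections yields the Kripke--Joyal
  clauses for \<open>\<exists>\<close> and \<open>\<forall>\<close>.

  The transpose \<open>e : A \<rightarrow> \<bbbP>A\<close> of \<open>\<rho>\<close> sends \<open>a\<close> to its class \<open>[a]\<close>; it satisfies the
  class formula \<open>\<sigma>\<close>, so it factors as \<open>e = \<lfloor>\<sigma>\<rfloor> \<circ> q\<close>.  Since the power object is strong,
  \<open>\<bbbP>A\<close> is extensional, whence \<open>a \<rho> b \<longleftrightarrow> [a] = [b] \<longleftrightarrow> q a = q b\<close>: the quotient is
  effective.  Every generalized element of the domain of \<open>\<lfloor>\<sigma>\<rfloor>\<close> is locally a class
  \<open>[a]\<close>, i.e. of the form \<open>q a\<close>.  Hence \<open>q\<close> is epi, and for \<open>f\<close> respecting \<open>\<rho>\<close> the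
  relation \<open>\<exists>a. q a = s \<and> f a = y\<close> is total and single-valued, so by Cauchy
  completeness it is the graph of a map \<open>h\<close> with \<open>h \<circ> q = f\<close>.\<close>

locale tripos =
  fixes T :: "('o,'m,'p) tripos_data"
  assumes is_tripos: "is_tripos T"
begin

abbreviation "Dom \<equiv> t_dom T"
abbreviation "Cod \<equiv> t_cod T"
abbreviation "Idm \<equiv> t_id T"
abbreviation "cmp \<equiv> t_comp T"
abbreviation "prd \<equiv> t_prd T"
abbreviation "p1 \<equiv> t_pr1 T"
abbreviation "p2 \<equiv> t_pr2 T"
abbreviation "pr \<equiv> t_pair T"
abbreviation "PP \<equiv> t_P T"
abbreviation "Le \<equiv> t_le T"
abbreviation "Top \<equiv> t_top T"
abbreviation "Meet \<equiv> t_meet T"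
abbreviation "Imp \<equiv> t_imp T"
abbreviation "rx \<equiv> t_rx T"
abbreviation "ex \<equiv> t_ex T"
abbreviation "al \<equiv> t_al T"

lemmas triple_defs = prd3_def q1_def q2_def q3_def

lemma is_category: "is_category T"
  and has_binary_products: "has_binary_products T"
  using is_tripos unfolding is_tripos_def by blast+

lemma Id_dom [simp]: "Dom (Idm X) = X"
  and Id_cod [simp]: "Cod (Idm X) = X"
  using is_category unfolding is_category_def hom_def by auto

lemma cmp_dom [simp]: "Cod f = Dom g \<Longrightarrow> Dom (cmp g f) = Dom f"
  and cmp_cod [simp]: "Cod f = Dom g \<Longrightarrow> Cod (cmp g f) = Cod g"
  using is_category unfolding is_category_def hom_def by metis+

lemma cmp_Id_left [simp]: "Cod f = X \<Longrightarrow> cmp (Idm X) f = f"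
  and cmp_Id_right [simp]: "Dom f = X \<Longrightarrow> cmp f (Idm X) = f"
  using is_category unfolding is_category_def by auto

lemma cmp_assoc [simp]:
  "Cod f = Dom g \<Longrightarrow> Cod g = Dom h \<Longrightarrow> cmp (cmp h g) f = cmp h (cmp g f)"
  using is_category unfolding is_category_def by metis

lemma p1_dom [simp]: "Dom (p1 A B) = prd A B" and p1_cod [simp]: "Cod (p1 A B) = A"
  and p2_dom [simp]: "Dom (p2 A B) = prd A B" and p2_cod [simp]: "Cod (p2 A B) = B"
  using has_binary_products unfolding has_binary_products_def hom_def by auto

lemma pr_dom [simp]: "Dom f = Dom g \<Longrightarrow> Dom (pr f g) = Dom f"
  and pr_cod [simp]: "Dom f = Dom g \<Longrightarrow> Cod (pr f g) = prd (Cod f) (Cod g)"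
  using has_binary_products unfolding has_binary_products_def hom_def by metis+

lemma p1_pr [simp]: "Dom f = Dom g \<Longrightarrow> Cod f = A \<Longrightarrow> Cod g = B \<Longrightarrow> cmp (p1 A B) (pr f g) = f"
  and p2_pr [simp]: "Dom f = Dom g \<Longrightarrow> Cod f = A \<Longrightarrow> Cod g = B \<Longrightarrow> cmp (p2 A B) (pr f g) = g"
  using has_binary_products unfolding has_binary_products_def hom_def by metis+

lemma pr_unique:
  "hom T f Z A \<Longrightarrow> hom T g Z B \<Longrightarrow> hom T h Z (prd A B) \<Longrightarrow>
   cmp (p1 A B) h = f \<Longrightarrow> cmp (p2 A B) h = g \<Longrightarrow> h = pr f g"
  using has_binary_products unfolding has_binary_products_def by blast

lemma pr_eta [simp]: "Cod h = prd A B \<Longrightarrow> pr (cmp (p1 A B) h) (cmp (p2 A B) h) = h"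
  by (rule sym, rule pr_unique[of _ "Dom h" A _ B]) (simp_all add: hom_def)

lemma pr_p1_p2 [simp]: "pr (p1 A B) (p2 A B) = Idm (prd A B)"
  using pr_eta[of "Idm (prd A B)" A B] by simp

lemma pr_cmp [simp]:
  assumes "Dom f = Dom g" "Cod h = Dom f"
  shows "cmp (pr f g) h = pr (cmp f h) (cmp g h)"
proof -
  let ?A = "Cod f" and ?B = "Cod g"
  have "cmp (p1 ?A ?B) (cmp (pr f g) h) = cmp f h" "cmp (p2 ?A ?B) (cmp (pr f g) h) = cmp g h"
    using assms by (simp_all flip: cmp_assoc)
  then show ?thesis
    using assms pr_eta[of "cmp (pr f g) h" ?A ?B] by simp
qed

lemma pr_eq_iff:
  assumes "Dom f = Dom g" "Dom f' = Dom g'" "Cod f = Cod f'" "Cod g = Cod g'"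
  shows "pr f g = pr f' g' \<longleftrightarrow> f = f' \<and> g = g'"
  using assms by (metis p1_pr p2_pr)

lemma cross_eq: "cross T f g = pr (cmp f (p1 (Dom f) (Dom g))) (cmp g (p2 (Dom f) (Dom g)))"
  unfolding cross_def ..

lemma heyting: "is_heyting T X"
proof -
  have "\<forall>X. is_heyting T X"
    using is_tripos unfolding is_tripos_def by (elim conjE) assumption
  then show ?thesis ..
qed

lemma le_refl [simp]: "a \<in> PP X \<Longrightarrow> Le X a a"
  using heyting[of X] unfolding is_heyting_def by (elim conjE) blast

lemma le_antisym: "a \<in> PP X \<Longrightarrow> b \<in> PP X \<Longrightarrow> Le X a b \<Longrightarrow> Le X b a \<Longrightarrow> a = b"
  using heyting[of X] unfolding is_heyting_def by (elim conjE) blast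

lemma le_trans: "Le X a b \<Longrightarrow> Le X b c \<Longrightarrow> a \<in> PP X \<Longrightarrow> b \<in> PP X \<Longrightarrow> c \<in> PP X \<Longrightarrow> Le X a c"
  using heyting[of X] unfolding is_heyting_def by (elim conjE) blast

lemma Top_P [simp]: "Top X \<in> PP X"
  using heyting[of X] unfolding is_heyting_def by (elim conjE)

lemma Meet_P [simp]: "a \<in> PP X \<Longrightarrow> b \<in> PP X \<Longrightarrow> Meet X a b \<in> PP X"
  and Imp_P [simp]: "a \<in> PP X \<Longrightarrow> b \<in> PP X \<Longrightarrow> Imp X a b \<in> PP X"
  using heyting[of X] unfolding is_heyting_def by (elim conjE; blast)+

lemma le_Top [simp]: "a \<in> PP X \<Longrightarrow> Le X a (Top X)"
  using heyting[of X] unfolding is_heyting_def by (elim conjE) blast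

lemma le_Meet: "a \<in> PP X \<Longrightarrow> b \<in> PP X \<Longrightarrow> c \<in> PP X \<Longrightarrow>
    Le X c (Meet X a b) \<longleftrightarrow> Le X c a \<and> Le X c b"
  and le_Imp: "a \<in> PP X \<Longrightarrow> b \<in> PP X \<Longrightarrow> c \<in> PP X \<Longrightarrow>
    Le X c (Imp X a b) \<longleftrightarrow> Le X (Meet X c a) b"
  using heyting[of X] unfolding is_heyting_def by (elim conjE; blast)+

lemma Top_le_Meet:
  "a \<in> PP X \<Longrightarrow> b \<in> PP X \<Longrightarrow> Le X (Top X) (Meet X a b) \<longleftrightarrow> Le X (Top X) a \<and> Le X (Top X) b"
  by (simp add: le_Meet)

lemma Meet_Top: "a \<in> PP X \<Longrightarrow> Meet X (Top X) a = a"
  using le_Meet[of "Top X" X a "Meet X (Top X) a"] le_Meet[of "Top X" X a a]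
  by (intro le_antisym[of _ X]) simp_all

lemma Top_le_Imp: "a \<in> PP X \<Longrightarrow> b \<in> PP X \<Longrightarrow> Le X (Top X) (Imp X a b) \<longleftrightarrow> Le X a b"
  by (simp add: le_Imp Meet_Top)

lemma iff_P [simp]: "a \<in> PP X \<Longrightarrow> b \<in> PP X \<Longrightarrow> iff T X a b \<in> PP X"
  unfolding iff_def by simp

lemma reindexing_heyting_hom:
  "\<forall>f X Y. hom T f X Y \<longrightarrow>
     (\<forall>a\<in>PP Y. rx f a \<in> PP X) \<and> rx f (Top Y) = Top X \<and> rx f (t_bot T Y) = t_bot T X \<and>
     (\<forall>a\<in>PP Y. \<forall>b\<in>PP Y. rx f (Meet Y a b) = Meet X (rx f a) (rx f b) \<and>
        rx f (t_join T Y a b) = t_join T X (rx f a) (rx f b) \<and>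
        rx f (Imp Y a b) = Imp X (rx f a) (rx f b))"
  using is_tripos unfolding is_tripos_def by (elim conjE) assumption

lemma rx_P [simp]: "Dom f = X \<Longrightarrow> a \<in> PP (Cod f) \<Longrightarrow> rx f a \<in> PP X"
  and rx_Top [simp]: "Cod f = Y \<Longrightarrow> rx f (Top Y) = Top (Dom f)"
  and rx_Meet [simp]: "Cod f = Y \<Longrightarrow> a \<in> PP Y \<Longrightarrow> b \<in> PP Y \<Longrightarrow>
      rx f (Meet Y a b) = Meet (Dom f) (rx f a) (rx f b)"
  and rx_Imp [simp]: "Cod f = Y \<Longrightarrow> a \<in> PP Y \<Longrightarrow> b \<in> PP Y \<Longrightarrow>
      rx f (Imp Y a b) = Imp (Dom f) (rx f a) (rx f b)"
  using reindexing_heyting_hom unfolding hom_def by blast+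

lemma reindexing_functorial:
  "(\<forall>X. \<forall>a\<in>PP X. rx (Idm X) a = a) \<and>
   (\<forall>f g. Cod f = Dom g \<longrightarrow> (\<forall>a\<in>PP (Cod g). rx (cmp g f) a = rx f (rx g a)))"
  using is_tripos unfolding is_tripos_def by (elim conjE) (intro conjI)

lemma rx_Id [simp]: "a \<in> PP X \<Longrightarrow> rx (Idm X) a = a"
  and rx_cmp: "Cod f = Dom g \<Longrightarrow> a \<in> PP (Cod g) \<Longrightarrow> rx (cmp g f) a = rx f (rx g a)"
  using reindexing_functorial by blast+

lemma rx_mono:
  assumes "Le Y a b" "Cod f = Y" "a \<in> PP Y" "b \<in> PP Y"
  shows "Le (Dom f) (rx f a) (rx f b)"
proof -
  have "Le Y (Meet Y a b) a"
    using assms le_Meet[of a Y b "Meet Y a b"] by simp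
  then have "Meet Y a b = a"
    using assms le_Meet[of a Y b a] by (intro le_antisym[of _ Y]) simp_all
  then have "rx f a = Meet (Dom f) (rx f a) (rx f b)"
    using assms rx_Meet[of f Y a b] by simp
  then show ?thesis
    using assms le_Meet[of "rx f a" "Dom f" "rx f b" "rx f a"] by simp
qed

lemma quantifier_adjunctions:
  "\<forall>f X Y. hom T f X Y \<longrightarrow>
     (\<forall>a\<in>PP X. ex f a \<in> PP Y \<and> al f a \<in> PP Y) \<and>
     (\<forall>a\<in>PP X. \<forall>b\<in>PP Y. Le Y (ex f a) b = Le X a (rx f b) \<and>
        Le X (rx f b) a = Le Y b (al f a) \<and> ex f (Meet X a (rx f b)) = Meet Y (ex f a) b)"
  using is_tripos unfolding is_tripos_def by (elim conjE) assumption

lemma ex_P [simp]: "Cod f = Y \<Longrightarrow> a \<in> PP (Dom f) \<Longrightarrow> ex f a \<in> PP Y"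
  and al_P [simp]: "Cod f = Y \<Longrightarrow> a \<in> PP (Dom f) \<Longrightarrow> al f a \<in> PP Y"
  and ex_adj: "a \<in> PP (Dom f) \<Longrightarrow> b \<in> PP (Cod f) \<Longrightarrow>
      Le (Cod f) (ex f a) b \<longleftrightarrow> Le (Dom f) a (rx f b)"
  and al_adj: "a \<in> PP (Dom f) \<Longrightarrow> b \<in> PP (Cod f) \<Longrightarrow>
      Le (Dom f) (rx f b) a \<longleftrightarrow> Le (Cod f) b (al f a)"
  using quantifier_adjunctions unfolding hom_def by blast+

lemma beck_chevalley:
  "is_pullback T g k p r \<Longrightarrow> a \<in> PP (Dom g) \<Longrightarrow>
   rx k (ex g a) = ex r (rx p a) \<and> rx k (al g a) = al r (rx p a)"
  using is_tripos unfolding is_tripos_def by blast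

lemma delta_P [simp]: "delta T A \<in> PP (prd A A)"
  unfolding delta_def by simp

section \<open>Generalized elements\<close>

definition holds :: "'m \<Rightarrow> 'p \<Rightarrow> bool" where
  "holds k \<phi> \<longleftrightarrow> Le (Dom k) (Top (Dom k)) (rx k \<phi>)"

lemma holds_rx: "Cod k = Dom g \<Longrightarrow> \<phi> \<in> PP (Cod g) \<Longrightarrow> holds k (rx g \<phi>) \<longleftrightarrow> holds (cmp g k) \<phi>"
  unfolding holds_def by (simp add: rx_cmp)

lemma holds_rx_pr:
  assumes "Cod k = Dom f" "Dom f = Dom g" "\<phi> \<in> PP (prd (Cod f) (Cod g))"
  shows "holds k (rx (pr f g) \<phi>) \<longleftrightarrow> holds (pr (cmp f k) (cmp g k)) \<phi>"
  using assms holds_rx[of k "pr f g" \<phi>] by simp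

lemma holds_mono:
  assumes "Le X \<phi> \<psi>" "Cod k = X" "\<phi> \<in> PP X" "\<psi> \<in> PP X" "holds k \<phi>"
  shows "holds k \<psi>"
  using assms rx_mono[of X \<phi> \<psi> k] le_trans[of "Dom k" "Top (Dom k)" "rx k \<phi>" "rx k \<psi>"]
  unfolding holds_def by simp

lemma holds_cmp: "holds k \<phi> \<Longrightarrow> Cod j = Dom k \<Longrightarrow> \<phi> \<in> PP (Cod k) \<Longrightarrow> holds (cmp k j) \<phi>"
  unfolding holds_def using rx_mono[of "Dom k" "Top (Dom k)" "rx k \<phi>" j] by (simp add: rx_cmp)

lemma holds_Meet [simp]:
  "Cod k = X \<Longrightarrow> a \<in> PP X \<Longrightarrow> b \<in> PP X \<Longrightarrow> holds k (Meet X a b) \<longleftrightarrow> holds k a \<and> holds k b"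
  unfolding holds_def by (simp add: Top_le_Meet)

lemma holds_ex_intro:
  assumes "cmp g w = k" "Cod w = Dom g" "\<phi> \<in> PP (Dom g)" "holds w \<phi>"
  shows "holds k (ex g \<phi>)"
proof -
  have ex_in: "ex g \<phi> \<in> PP (Cod g)"
    using assms(3) by simp
  have unit: "Le (Dom g) \<phi> (rx g (ex g \<phi>))"
    using ex_adj[OF assms(3) ex_in] le_refl[OF ex_in] by simp
  have "holds w (rx g (ex g \<phi>))"
    by (rule holds_mono[OF unit]) (use assms ex_in in simp_all)
  then show ?thesis
    using assms holds_rx[of w g "ex g \<phi>"] ex_in by simp
qed

lemma holds_al_elim:
  assumes "cmp g w = cmp k j" "Cod w = Dom g" "Cod j = Dom k" "Cod k = Cod g"
    and "\<phi> \<in> PP (Dom g)" "holds k (al g \<phi>)"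
  shows "holds w \<phi>"
proof -
  have al_in: "al g \<phi> \<in> PP (Cod g)"
    using assms(5) by simp
  have "holds (cmp k j) (al g \<phi>)"
    using holds_cmp[OF assms(6,3)] assms(4) al_in by simp
  then have holds_rx_al: "holds w (rx g (al g \<phi>))"
    using holds_rx[OF assms(2) al_in] assms(1) by simp
  have counit: "Le (Dom g) (rx g (al g \<phi>)) \<phi>"
    using al_adj[OF assms(5) al_in] le_refl[OF al_in] by simp
  show ?thesis
    by (rule holds_mono[OF counit _ _ _ holds_rx_al]) (use assms al_in in simp_all)
qed

text \<open>When \<open>\<langle>t, g\<rangle>\<close> is an isomorphism with inverse \<open>i\<close>, the map \<open>g\<close> is, up to \<open>i\<close>,
  the projection \<open>Cod t \<times> Cod g \<rightarrow> Cod g\<close>, so it has pullbacks along every map.\<close>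

definition pair_iso :: "'m \<Rightarrow> 'm \<Rightarrow> 'm \<Rightarrow> bool" where
  "pair_iso t g i \<longleftrightarrow> Dom t = Dom g \<and> Dom i = prd (Cod t) (Cod g) \<and> Cod i = Dom g \<and>
     cmp i (pr t g) = Idm (Dom g) \<and> cmp (pr t g) i = Idm (prd (Cod t) (Cod g))"

lemma pair_iso_inverse:
  assumes "pair_iso t g i"
  shows "cmp t i = p1 (Cod t) (Cod g) \<and> cmp g i = p2 (Cod t) (Cod g)"
proof -
  have "pr (cmp t i) (cmp g i) = pr (p1 (Cod t) (Cod g)) (p2 (Cod t) (Cod g))"
    using assms unfolding pair_iso_def by auto
  then show ?thesis
    using assms unfolding pair_iso_def by (subst (asm) pr_eq_iff) auto
qed

lemma pair_iso_pullback:
  assumes iso: "pair_iso t g i" and k: "Cod k = Cod g"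
  shows "is_pullback T g k (cmp i (pr (p1 (Cod t) (Dom k)) (cmp k (p2 (Cod t) (Dom k)))))
    (p2 (Cod t) (Dom k))"
proof -
  define A K where "A = Cod t" and "K = Dom k"
  define p where "p = cmp i (pr (p1 A K) (cmp k (p2 A K)))"
  have i: "Cod t = A" "Dom t = Dom g" "Dom i = prd A (Cod g)" "Cod i = Dom g"
    "cmp i (pr t g) = Idm (Dom g)" "cmp t i = p1 A (Cod g)" "cmp g i = p2 A (Cod g)"
    using iso pair_iso_inverse[OF iso] unfolding pair_iso_def A_def by auto
  have p: "Dom p = prd A K" "Cod p = Dom g"
    using i k unfolding p_def K_def by simp_all
  have gp: "cmp g p = cmp k (p2 A K)"
    using i k unfolding p_def K_def by (simp flip: cmp_assoc)
  have tp: "cmp t p = p1 A K"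
    using i k unfolding p_def K_def by (simp flip: cmp_assoc)
  have "\<exists>!w. hom T w (Dom u) (Dom p) \<and> cmp p w = u \<and> cmp (p2 A K) w = v"
    if u: "Cod u = Dom g" "Cod v = K" "Dom u = Dom v" "cmp g u = cmp k v" for u v
  proof
    let ?w = "pr (cmp t u) v"
    have "cmp p ?w = cmp i (pr (cmp t u) (cmp g u))"
      using i k u unfolding p_def K_def by simp
    also have "\<dots> = cmp i (cmp (pr t g) u)"
      using i u(1-3) by simp
    also have "\<dots> = u"
      using i u(1-3) by (simp del: pr_cmp flip: cmp_assoc)
    finally show "hom T ?w (Dom u) (Dom p) \<and> cmp p ?w = u \<and> cmp (p2 A K) ?w = v"
      using i u p unfolding hom_def A_def by simp
  next
    fix w assume w: "hom T w (Dom u) (Dom p) \<and> cmp p w = u \<and> cmp (p2 A K) w = v"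
    then have "cmp t u = cmp (p1 A K) w"
      using tp i p unfolding hom_def by (metis cmp_assoc)
    then show "w = pr (cmp t u) v"
      using w p pr_eta[of w A K] unfolding hom_def by simp
  qed
  then show ?thesis
    using i k p gp unfolding is_pullback_def p_def A_def K_def by simp
qed

lemma pair_iso_pullback_cmp:
  assumes "pair_iso t g i" "Cod k = Cod g" "Cod j = prd (Cod t) (Dom k)"
  shows "cmp (cmp i (pr (p1 (Cod t) (Dom k)) (cmp k (p2 (Cod t) (Dom k))))) j =
    cmp i (pr (cmp (p1 (Cod t) (Dom k)) j) (cmp k (cmp (p2 (Cod t) (Dom k)) j)))"
  using assms unfolding pair_iso_def by auto

lemma pair_iso_p1_p2: "pair_iso (p1 X Y) (p2 X Y) (Idm (prd X Y))"
  unfolding pair_iso_def by simp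

lemma pair_iso_q1_q23:
  "pair_iso (q1 T X Y Z) (pr (q2 T X Y Z) (q3 T X Y Z))
     (pr (pr (p1 X (prd Y Z)) (cmp (p1 Y Z) (p2 X (prd Y Z)))) (cmp (p2 Y Z) (p2 X (prd Y Z))))"
  unfolding pair_iso_def triple_defs by simp

lemma pair_iso_q2_q13:
  "pair_iso (q2 T X Y Z) (pr (q1 T X Y Z) (q3 T X Y Z))
     (pr (pr (cmp (p1 X Z) (p2 Y (prd X Z))) (p1 Y (prd X Z))) (cmp (p2 X Z) (p2 Y (prd X Z))))"
  unfolding pair_iso_def triple_defs by simp

end

locale extensional_tripos = tripos +
  assumes extensional: "extensional T"
begin

lemma eq_iff_Top_le_delta:
  assumes "Dom f = Dom g" "Cod f = Y" "Cod g = Y"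
  shows "Le (Dom f) (Top (Dom f)) (rx (pr f g) (delta T Y)) \<longleftrightarrow> f = g"
  using assms extensional unfolding extensional_def hom_def by metis

lemma holds_delta:
  assumes "Dom f = Dom g" "Cod f = A" "Cod g = A"
  shows "holds (pr f g) (delta T A) \<longleftrightarrow> f = g"
  using eq_iff_Top_le_delta[OF assms] assms(1) unfolding holds_def by simp

lemma holds_rx_delta:
  assumes "Cod j = Dom f" "Dom f = Dom g" "Cod f = Y" "Cod g = Y"
  shows "holds j (rx (pr f g) (delta T Y)) \<longleftrightarrow> cmp f j = cmp g j"
  using assms by (simp add: holds_rx_pr holds_delta)

end

text \<open>Full comprehension makes the fibres well-pointed: an inequality of predicates
  can be tested at generalized elements.\<close>

locale comprehensive_tripos = tripos +
  assumes has_full_comprehensions: "has_full_comprehensions T"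
begin

lemma le_if_holds:
  assumes "\<phi> \<in> PP Z" "\<psi> \<in> PP Z" and "\<And>k. Cod k = Z \<Longrightarrow> holds k \<phi> \<Longrightarrow> holds k \<psi>"
  shows "Le Z \<phi> \<psi>"
proof -
  obtain c where c: "full_comprehension T Z \<phi> c"
    using has_full_comprehensions assms(1) unfolding has_full_comprehensions_def by blast
  then have c_cod: "Cod c = Z" and c_top: "rx c \<phi> = Top (Dom c)"
    and c_full: "Le (Dom c) (rx c \<phi>) (rx c \<psi>) \<longleftrightarrow> Le Z \<phi> \<psi>"
    using assms(2) unfolding full_comprehension_def by blast+
  have "holds c \<phi>"
    unfolding holds_def using c_top assms(2) by simp
  then have "holds c \<psi>"
    using assms(3) c_cod by blast
  then show ?thesis
    using c_top c_full unfolding holds_def by simp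
qed

lemma eq_if_holds_iff:
  assumes "\<phi> \<in> PP Z" "\<psi> \<in> PP Z" and "\<And>k. Cod k = Z \<Longrightarrow> holds k \<phi> \<longleftrightarrow> holds k \<psi>"
  shows "\<phi> = \<psi>"
  using assms by (intro le_antisym[of _ Z] le_if_holds) auto

lemma holds_Imp:
  assumes "Cod k = X" "a \<in> PP X" "b \<in> PP X"
  shows "holds k (Imp X a b) \<longleftrightarrow> (\<forall>j. Cod j = Dom k \<longrightarrow> holds (cmp k j) a \<longrightarrow> holds (cmp k j) b)"
proof -
  have "holds k (Imp X a b) \<longleftrightarrow> Le (Dom k) (rx k a) (rx k b)"
    unfolding holds_def using assms by (simp add: Top_le_Imp)
  also have "\<dots> \<longleftrightarrow> (\<forall>j. Cod j = Dom k \<longrightarrow> holds j (rx k a) \<longrightarrow> holds j (rx k b))"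
    using assms by (auto intro: le_if_holds holds_mono)
  also have "\<dots> \<longleftrightarrow> (\<forall>j. Cod j = Dom k \<longrightarrow> holds (cmp k j) a \<longrightarrow> holds (cmp k j) b)"
    using assms by (simp add: holds_rx)
  finally show ?thesis .
qed

lemma holds_iff:
  "Cod k = X \<Longrightarrow> a \<in> PP X \<Longrightarrow> b \<in> PP X \<Longrightarrow>
   holds k (iff T X a b) \<longleftrightarrow> (\<forall>j. Cod j = Dom k \<longrightarrow> (holds (cmp k j) a \<longleftrightarrow> holds (cmp k j) b))"
  unfolding iff_def by (auto simp: holds_Imp)

lemma holds_al_intro:
  assumes iso: "pair_iso t g i" and k: "Cod k = Cod g" and \<phi>: "\<phi> \<in> PP (Dom g)"
    and H: "\<And>x j. Cod x = Cod t \<Longrightarrow> Cod j = Dom k \<Longrightarrow> Dom x = Dom j \<Longrightarrow>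
      holds (cmp i (pr x (cmp k j))) \<phi>"
  shows "holds k (al g \<phi>)"
proof -
  define p r where "p = cmp i (pr (p1 (Cod t) (Dom k)) (cmp k (p2 (Cod t) (Dom k))))"
    and "r = p2 (Cod t) (Dom k)"
  have pb: "is_pullback T g k p r"
    unfolding p_def r_def using pair_iso_pullback[OF iso k] .
  have p: "Cod p = Dom g" "Dom p = prd (Cod t) (Dom k)"
    using iso k unfolding p_def pair_iso_def by auto
  have "Le (Dom p) (Top (Dom p)) (rx p \<phi>)"
  proof (rule le_if_holds)
    fix j assume j: "Cod j = Dom p"
    have "holds (cmp p j) \<phi>"
      using H[of "cmp (p1 (Cod t) (Dom k)) j" "cmp (p2 (Cod t) (Dom k)) j"] j p
        pair_iso_pullback_cmp[OF iso k, of j] unfolding p_def by simp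
    then show "holds j (rx p \<phi>)"
      using j p \<phi> holds_rx by simp
  qed (use p \<phi> in simp_all)
  then have "Le (Dom k) (Top (Dom k)) (al r (rx p \<phi>))"
    using al_adj[of "rx p \<phi>" r "Top (Dom k)"] p \<phi> unfolding r_def by simp
  then show ?thesis
    unfolding holds_def using beck_chevalley[OF pb \<phi>] p r_def by simp
qed

lemma holds_ex_elim:
  assumes iso: "pair_iso t g i" and k: "Cod k = Cod g" and \<phi>: "\<phi> \<in> PP (Dom g)"
    and ex: "holds k (ex g \<phi>)" and \<psi>: "\<psi> \<in> PP (Dom k)"
    and H: "\<And>x j. Cod x = Cod t \<Longrightarrow> Cod j = Dom k \<Longrightarrow> Dom x = Dom j \<Longrightarrow>
      holds (cmp i (pr x (cmp k j))) \<phi> \<Longrightarrow> holds j \<psi>"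
  shows "Le (Dom k) (Top (Dom k)) \<psi>"
proof -
  define p r where "p = cmp i (pr (p1 (Cod t) (Dom k)) (cmp k (p2 (Cod t) (Dom k))))"
    and "r = p2 (Cod t) (Dom k)"
  have pb: "is_pullback T g k p r"
    unfolding p_def r_def using pair_iso_pullback[OF iso k] .
  have p: "Cod p = Dom g" "Dom p = prd (Cod t) (Dom k)"
    using iso k unfolding p_def pair_iso_def by auto
  have "Le (Dom p) (rx p \<phi>) (rx r \<psi>)"
  proof (rule le_if_holds)
    fix j assume j: "Cod j = Dom p" and "holds j (rx p \<phi>)"
    then have "holds (cmp p j) \<phi>"
      using p \<phi> holds_rx by simp
    then have "holds (cmp r j) \<psi>"
      using H[of "cmp (p1 (Cod t) (Dom k)) j" "cmp (p2 (Cod t) (Dom k)) j"] j p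
        pair_iso_pullback_cmp[OF iso k, of j] unfolding p_def r_def by simp
    then show "holds j (rx r \<psi>)"
      using j p \<psi> holds_rx unfolding r_def by simp
  qed (use p \<phi> \<psi> in \<open>simp_all add: r_def\<close>)
  then have "Le (Dom k) (ex r (rx p \<phi>)) \<psi>"
    using ex_adj[of "rx p \<phi>" r \<psi>] p \<phi> \<psi> unfolding r_def by simp
  moreover have "Le (Dom k) (Top (Dom k)) (ex r (rx p \<phi>))"
    using ex beck_chevalley[OF pb \<phi>] unfolding holds_def by simp
  ultimately show ?thesis
    using p \<phi> \<psi> le_trans[of "Dom k" "Top (Dom k)" "ex r (rx p \<phi>)" \<psi>] unfolding r_def by simp
qed

lemma holds_ex_p2_elim:
  assumes "holds k (ex (p2 V W) \<phi>)" "Cod k = W" "\<phi> \<in> PP (prd V W)" "\<psi> \<in> PP (Dom k)"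
    and "\<And>x j. Cod x = V \<Longrightarrow> Cod j = Dom k \<Longrightarrow> Dom x = Dom j \<Longrightarrow>
      holds (pr x (cmp k j)) \<phi> \<Longrightarrow> holds j \<psi>"
  shows "Le (Dom k) (Top (Dom k)) \<psi>"
proof (rule holds_ex_elim[OF pair_iso_p1_p2])
  fix x j assume "Cod x = Cod (p1 V W)" "Cod j = Dom k" "Dom x = Dom j"
    and "holds (cmp (Idm (prd V W)) (pr x (cmp k j))) \<phi>"
  then show "holds j \<psi>"
    using assms(2,5) by simp
qed (use assms in simp_all)

lemma holds_al_q23_intro:
  assumes "Cod b = Y" "Cod c = Z" "Dom b = Dom c" "\<phi> \<in> PP (prd3 T X Y Z)"
    and "\<And>x j. Cod x = X \<Longrightarrow> Cod j = Dom b \<Longrightarrow> Dom x = Dom j \<Longrightarrow>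
      holds (pr (pr x (cmp b j)) (cmp c j)) \<phi>"
  shows "holds (pr b c) (al (pr (q2 T X Y Z) (q3 T X Y Z)) \<phi>)"
  by (rule holds_al_intro[OF pair_iso_q1_q23]) (use assms in \<open>simp_all add: triple_defs\<close>)

lemma holds_al_q13_intro:
  assumes "Cod a = X" "Cod c = Z" "Dom a = Dom c" "\<phi> \<in> PP (prd3 T X Y Z)"
    and "\<And>y j. Cod y = Y \<Longrightarrow> Cod j = Dom a \<Longrightarrow> Dom y = Dom j \<Longrightarrow>
      holds (pr (pr (cmp a j) y) (cmp c j)) \<phi>"
  shows "holds (pr a c) (al (pr (q1 T X Y Z) (q3 T X Y Z)) \<phi>)"
  by (rule holds_al_intro[OF pair_iso_q2_q13]) (use assms in \<open>simp_all add: triple_defs\<close>)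

end

section \<open>Classes of an equivalence relation in a strong power object\<close>

locale equivalence_setting = comprehensive_tripos + extensional_tripos +
  fixes A PA m \<rho>
  assumes strong_power: "strong_power T A PA m" and equiv_rel: "equiv_rel T A \<rho>"
begin

lemma m_P [simp]: "m \<in> PP (prd A PA)"
  using strong_power unfolding strong_power_def weak_power_def by blast

lemma rho_P [simp]: "\<rho> \<in> PP (prd A A)"
  using equiv_rel unfolding equiv_rel_def by blast

lemma delta_PA:
  "delta T PA = al (pr (q2 T A PA PA) (q3 T A PA PA))
     (iff T (prd3 T A PA PA) (rx (pr (q1 T A PA PA) (q2 T A PA PA)) m)
        (rx (pr (q1 T A PA PA) (q3 T A PA PA)) m))"
  using strong_power unfolding strong_power_def by blast

lemma rho_refl: "Cod a = A \<Longrightarrow> holds (pr a a) \<rho>"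
  using equiv_rel unfolding equiv_rel_def
  by (intro holds_mono[of "prd A A" "delta T A" \<rho>]) (auto simp: holds_delta)

lemma rho_sym:
  assumes "holds (pr a b) \<rho>" "Cod a = A" "Cod b = A" "Dom a = Dom b"
  shows "holds (pr b a) \<rho>"
proof -
  have "Le (prd A A) \<rho> (rx (pr (p2 A A) (p1 A A)) \<rho>)"
    using equiv_rel unfolding equiv_rel_def by blast
  then have "holds (pr a b) (rx (pr (p2 A A) (p1 A A)) \<rho>)"
    using assms by (intro holds_mono[of "prd A A" \<rho> "rx (pr (p2 A A) (p1 A A)) \<rho>"]) simp_all
  then show ?thesis
    using assms by (simp add: holds_rx_pr)
qed

lemma rho_sym_iff:
  "Cod a = A \<Longrightarrow> Cod b = A \<Longrightarrow> Dom a = Dom b \<Longrightarrow> holds (pr a b) \<rho> \<longleftrightarrow> holds (pr b a) \<rho>"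
  using rho_sym by metis

lemma rho_trans:
  assumes "holds (pr a b) \<rho>" "holds (pr b d) \<rho>" "Cod a = A" "Cod b = A" "Cod d = A"
    "Dom a = Dom b" "Dom b = Dom d"
  shows "holds (pr a d) \<rho>"
proof -
  let ?\<rho>12 = "rx (pr (q1 T A A A) (q2 T A A A)) \<rho>" and ?\<rho>23 = "rx (pr (q2 T A A A) (q3 T A A A)) \<rho>"
    and ?\<rho>13 = "rx (pr (q1 T A A A) (q3 T A A A)) \<rho>"
  have "Le (prd3 T A A A) (Meet (prd3 T A A A) ?\<rho>12 ?\<rho>23) ?\<rho>13"
    using equiv_rel unfolding equiv_rel_def by blast
  moreover have "holds (pr (pr a b) d) (Meet (prd3 T A A A) ?\<rho>12 ?\<rho>23)"
    using assms by (simp add: holds_rx holds_rx_pr triple_defs)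
  ultimately have "holds (pr (pr a b) d) ?\<rho>13"
    using assms by (intro holds_mono[of "prd3 T A A A" "Meet (prd3 T A A A) ?\<rho>12 ?\<rho>23" ?\<rho>13])
      (simp_all add: triple_defs)
  then show ?thesis
    using assms by (simp add: holds_rx holds_rx_pr triple_defs)
qed

lemma power_ext:
  assumes S: "Cod S = PA" "Cod S' = PA" "Dom S = Dom S'"
    and mem: "\<And>x j. Cod x = A \<Longrightarrow> Cod j = Dom S \<Longrightarrow> Dom x = Dom j \<Longrightarrow>
      holds (pr x (cmp S j)) m \<longleftrightarrow> holds (pr x (cmp S' j)) m"
  shows "S = S'"
proof -
  let ?m2 = "rx (pr (q1 T A PA PA) (q2 T A PA PA)) m" and ?m3 = "rx (pr (q1 T A PA PA) (q3 T A PA PA)) m"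
  have "holds (pr S S') (delta T PA)"
    unfolding delta_PA
  proof (rule holds_al_q23_intro)
    fix x j assume xj: "Cod x = A" "Cod j = Dom S" "Dom x = Dom j"
    let ?k = "pr (pr x (cmp S j)) (cmp S' j)"
    have "holds (cmp ?k j') ?m2 \<longleftrightarrow> holds (cmp ?k j') ?m3" if j': "Cod j' = Dom x" for j'
    proof -
      have "holds (cmp ?k j') ?m2 \<longleftrightarrow> holds (pr (cmp x j') (cmp S (cmp j j'))) m"
        using xj S j' by (simp add: holds_rx holds_rx_pr triple_defs)
      also have "\<dots> \<longleftrightarrow> holds (pr (cmp x j') (cmp S' (cmp j j'))) m"
        using mem[of "cmp x j'" "cmp j j'"] xj j' by simp
      also have "\<dots> \<longleftrightarrow> holds (cmp ?k j') ?m3"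
        using xj S j' by (simp add: holds_rx holds_rx_pr triple_defs)
      finally show ?thesis .
    qed
    then show "holds ?k (iff T (prd3 T A PA PA) ?m2 ?m3)"
      using xj S by (subst holds_iff) (simp_all add: triple_defs)
  qed (use S in \<open>simp_all add: triple_defs\<close>)
  then show ?thesis
    using S holds_delta by simp
qed

text \<open>The transpose of \<open>\<rho>\<close> along the power object: it sends \<open>a\<close> to its class \<open>[a]\<close>.\<close>

definition class_map where
  "class_map = (SOME e. Dom e = A \<and> Cod e = PA \<and> \<rho> = rx (cross T (Idm A) e) m)"

lemma class_map: "Dom class_map = A" "Cod class_map = PA" "\<rho> = rx (cross T (Idm A) class_map) m"
proof -
  obtain e where "hom T e A PA" "\<rho> = rx (cross T (Idm A) e) m"
    using strong_power rho_P unfolding strong_power_def weak_power_def by blast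
  then have "Dom e = A \<and> Cod e = PA \<and> \<rho> = rx (cross T (Idm A) e) m"
    unfolding hom_def by blast
  then have "Dom class_map = A \<and> Cod class_map = PA \<and> \<rho> = rx (cross T (Idm A) class_map) m"
    unfolding class_map_def by (rule someI)
  then show "Dom class_map = A" "Cod class_map = PA" "\<rho> = rx (cross T (Idm A) class_map) m"
    by auto
qed

lemma class_map_dom [simp]: "Dom class_map = A"
  and class_map_cod [simp]: "Cod class_map = PA"
  using class_map by auto

lemma holds_mem_class_map:
  assumes "Cod x = A" "Cod a = A" "Dom x = Dom a"
  shows "holds (pr x (cmp class_map a)) m \<longleftrightarrow> holds (pr x a) \<rho>"
proof -
  have "holds (pr x a) \<rho> \<longleftrightarrow> holds (pr x a) (rx (cross T (Idm A) class_map) m)"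
    using class_map(3) by simp
  also have "\<dots> \<longleftrightarrow> holds (pr x (cmp class_map a)) m"
    using assms by (simp add: holds_rx cross_eq)
  finally show ?thesis ..
qed

text \<open>Reading \<open>m\<close> as \<open>\<in>\<close>: \<open>rel_iff_mem (y, x, S)\<close> is \<open>y \<rho> x \<longleftrightarrow> x \<in> S\<close>, so \<open>is_class_of (y, S)\<close>
  says \<open>S = [y]\<close> and the class formula \<open>\<sigma>(S)\<close> is \<open>\<exists>y. y \<in> S \<and> S = [y]\<close>.\<close>

abbreviation "rel_iff_mem \<equiv> iff T (prd3 T A A PA)
  (rx (pr (q1 T A A PA) (q2 T A A PA)) \<rho>) (rx (pr (q2 T A A PA) (q3 T A A PA)) m)"

abbreviation "is_class_of \<equiv> al (pr (q1 T A A PA) (q3 T A A PA)) rel_iff_mem"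

abbreviation "\<sigma> \<equiv> class_formula T A PA m \<rho>"

lemma rel_iff_mem_P [simp]: "rel_iff_mem \<in> PP (prd3 T A A PA)"
  and is_class_of_P [simp]: "is_class_of \<in> PP (prd A PA)"
  and class_formula_P [simp]: "\<sigma> \<in> PP PA"
  unfolding class_formula_def by (simp_all add: triple_defs)

lemma class_formula_eq: "\<sigma> = ex (p2 A PA) (Meet (prd A PA) m is_class_of)"
  unfolding class_formula_def ..

lemma holds_rel_iff_mem:
  assumes "Cod y = A" "Cod x = A" "Cod S = PA" "Dom y = Dom x" "Dom x = Dom S"
  shows "holds (pr (pr y x) S) rel_iff_mem \<longleftrightarrow>
    (\<forall>j. Cod j = Dom x \<longrightarrow> (holds (pr (cmp y j) (cmp x j)) \<rho> \<longleftrightarrow> holds (pr (cmp x j) (cmp S j)) m))"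
  using assms by (subst holds_iff) (simp_all add: holds_rx holds_rx_pr triple_defs)

lemma holds_class_formula_class_map: "holds class_map \<sigma>"
  unfolding class_formula_eq
proof (rule holds_ex_intro[where w = "pr (Idm A) class_map"])
  have "holds (pr (Idm A) class_map) m"
    using holds_mem_class_map[of "Idm A" "Idm A"] rho_refl[of "Idm A"] by simp
  moreover have "holds (pr (Idm A) class_map) is_class_of"
  proof (rule holds_al_q13_intro)
    fix x j assume xj: "Cod x = A" "Cod j = Dom (Idm A)" "Dom x = Dom j"
    then show "holds (pr (pr (cmp (Idm A) j) x) (cmp class_map j)) rel_iff_mem"
      using xj by (simp add: holds_rel_iff_mem holds_mem_class_map rho_sym_iff)
  qed (simp_all add: triple_defs)
  ultimately show "holds (pr (Idm A) class_map) (Meet (prd A PA) m is_class_of)"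
    by simp
qed simp_all

lemma class_formula_witness:
  assumes xS: "Cod x = A" "Cod S = PA" "Dom x = Dom S"
    and witness: "holds (pr x S) (Meet (prd A PA) m is_class_of)"
  shows "S = cmp class_map x"
proof (rule power_ext)
  have S_class: "holds (pr x S) is_class_of"
    using witness xS by simp
  fix y j assume yj: "Cod y = A" "Cod j = Dom S" "Dom y = Dom j"
  have "holds (pr (pr (cmp x j) y) (cmp S j)) rel_iff_mem"
  proof (rule holds_al_elim[OF _ _ _ _ _ S_class])
    show "cmp (pr (q1 T A A PA) (q3 T A A PA)) (pr (pr (cmp x j) y) (cmp S j)) = cmp (pr x S) j"
      using xS yj by (simp add: triple_defs)
  qed (use xS yj in \<open>simp_all add: triple_defs\<close>)
  then have "holds (pr (cmp x j) y) \<rho> \<longleftrightarrow> holds (pr y (cmp S j)) m"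
    using xS yj holds_rel_iff_mem[of "cmp x j" y "cmp S j"] by (auto dest: spec[of _ "Idm (Dom y)"])
  also have "holds (pr (cmp x j) y) \<rho> \<longleftrightarrow> holds (pr y (cmp x j)) \<rho>"
    using xS yj by (simp add: rho_sym_iff)
  also have "\<dots> \<longleftrightarrow> holds (pr y (cmp (cmp class_map x) j)) m"
    using xS yj holds_mem_class_map[of y "cmp x j"] by simp
  finally show "holds (pr y (cmp S j)) m \<longleftrightarrow> holds (pr y (cmp (cmp class_map x) j)) m" ..
qed (use xS in simp_all)

end

section \<open>The comprehension of the class formula as quotient\<close>

locale class_comprehension = equivalence_setting +
  fixes c
  assumes class_comprehension: "full_comprehension T PA (class_formula T A PA m \<rho>) c"
begin

lemma c_cod [simp]: "Cod c = PA"
  and c_top: "rx c \<sigma> = Top (Dom c)"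
  and c_universal: "Cod f = PA \<Longrightarrow> rx f \<sigma> = Top (Dom f) \<Longrightarrow>
      \<exists>!h. hom T h (Dom f) (Dom c) \<and> cmp c h = f"
  using class_comprehension unfolding full_comprehension_def by blast+

lemma c_mono:
  assumes "Cod u = Dom c" "Cod v = Dom c" "Dom u = Dom v" "cmp c u = cmp c v"
  shows "u = v"
proof -
  have "rx (cmp c u) \<sigma> = Top (Dom (cmp c u))"
    using assms c_top by (simp add: rx_cmp)
  then have "\<exists>!h. hom T h (Dom u) (Dom c) \<and> cmp c h = cmp c u"
    using assms c_universal[of "cmp c u"] by simp
  then show ?thesis
    using assms unfolding hom_def by auto
qed

definition quotient_map where
  "quotient_map = (THE h. hom T h A (Dom c) \<and> cmp c h = class_map)"

lemma quotient_map: "Dom quotient_map = A" "Cod quotient_map = Dom c" "cmp c quotient_map = class_map"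
proof -
  have "rx class_map \<sigma> = Top A"
    using holds_class_formula_class_map unfolding holds_def by (intro le_antisym[of _ A]) simp_all
  then have "\<exists>!h. hom T h A (Dom c) \<and> cmp c h = class_map"
    using c_universal[of class_map] by simp
  then have "hom T quotient_map A (Dom c) \<and> cmp c quotient_map = class_map"
    unfolding quotient_map_def by (rule theI')
  then show "Dom quotient_map = A" "Cod quotient_map = Dom c" "cmp c quotient_map = class_map"
    unfolding hom_def by auto
qed

lemma quotient_map_dom [simp]: "Dom quotient_map = A"
  and quotient_map_cod [simp]: "Cod quotient_map = Dom c"
  using quotient_map by auto

lemma c_quotient_map: "Cod a = A \<Longrightarrow> cmp c (cmp quotient_map a) = cmp class_map a"
  using quotient_map(3) cmp_assoc[of a quotient_map c] by simp

lemma rho_iff_quotient_map: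
  assumes ab: "Cod a = A" "Cod b = A" "Dom a = Dom b"
  shows "holds (pr a b) \<rho> \<longleftrightarrow> cmp quotient_map a = cmp quotient_map b"
proof
  assume ab_rel: "holds (pr a b) \<rho>"
  have "cmp class_map a = cmp class_map b"
  proof (rule power_ext)
    fix x j assume xj: "Cod x = A" "Cod j = Dom (cmp class_map a)" "Dom x = Dom j"
    then have j: "Cod j = Dom a"
      using ab by simp
    have ab_rel_j: "holds (pr (cmp a j) (cmp b j)) \<rho>"
      using holds_cmp[OF ab_rel, of j] ab j by simp
    have "holds (pr x (cmp a j)) \<rho> \<longleftrightarrow> holds (pr x (cmp b j)) \<rho>"
      using rho_trans[OF _ ab_rel_j] rho_trans[OF _ rho_sym[OF ab_rel_j]] xj ab j by auto
    then show "holds (pr x (cmp (cmp class_map a) j)) m \<longleftrightarrow> holds (pr x (cmp (cmp class_map b) j)) m"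
      using xj ab j holds_mem_class_map[of x "cmp a j"] holds_mem_class_map[of x "cmp b j"] by simp
  qed (use ab in simp_all)
  then show "cmp quotient_map a = cmp quotient_map b"
    using c_mono[of "cmp quotient_map a" "cmp quotient_map b"] c_quotient_map ab by simp
next
  assume "cmp quotient_map a = cmp quotient_map b"
  then have "cmp class_map a = cmp class_map b"
    using c_quotient_map ab by metis
  moreover have "holds (pr a (cmp class_map a)) m"
    using holds_mem_class_map[of a a] rho_refl[of a] ab by simp
  ultimately show "holds (pr a b) \<rho>"
    using holds_mem_class_map[of a b] ab by simp
qed

lemma rho_eq_kernel: "\<rho> = rx (cross T quotient_map quotient_map) (delta T (Dom c))"
proof (rule eq_if_holds_iff[of _ "prd A A"])
  fix k assume k: "Cod k = prd A A"
  define a b where "a = cmp (p1 A A) k" and "b = cmp (p2 A A) k"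
  have ab: "Cod a = A" "Cod b = A" "Dom a = Dom b" "k = pr a b"
    using k unfolding a_def b_def by simp_all
  have "holds k (rx (cross T quotient_map quotient_map) (delta T (Dom c))) \<longleftrightarrow>
      holds (pr (cmp quotient_map a) (cmp quotient_map b)) (delta T (Dom c))"
    using ab by (simp add: holds_rx cross_eq)
  also have "\<dots> \<longleftrightarrow> holds k \<rho>"
    using ab rho_iff_quotient_map holds_delta by simp
  finally show "holds k \<rho> \<longleftrightarrow> holds k (rx (cross T quotient_map quotient_map) (delta T (Dom c)))" ..
qed (simp_all add: cross_eq)

lemma quotient_map_covers:
  assumes s: "Cod s = Dom c" and \<psi>: "\<psi> \<in> PP (Dom s)"
    and H: "\<And>j a. Cod j = Dom s \<Longrightarrow> Cod a = A \<Longrightarrow> Dom a = Dom j \<Longrightarrow>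
      cmp s j = cmp quotient_map a \<Longrightarrow> holds j \<psi>"
  shows "Le (Dom s) (Top (Dom s)) \<psi>"
proof -
  have "holds (cmp c s) \<sigma>"
    using s c_top unfolding holds_def by (simp add: rx_cmp)
  then have "Le (Dom (cmp c s)) (Top (Dom (cmp c s))) \<psi>"
    unfolding class_formula_eq
  proof (rule holds_ex_p2_elim)
    fix x j assume xj: "Cod x = A" "Cod j = Dom (cmp c s)" "Dom x = Dom j"
      and "holds (pr x (cmp (cmp c s) j)) (Meet (prd A PA) m is_class_of)"
    then have "cmp c (cmp s j) = cmp class_map x"
      using s class_formula_witness[of x "cmp c (cmp s j)"] by simp
    then have "cmp s j = cmp quotient_map x"
      using s xj c_quotient_map c_mono[of "cmp s j" "cmp quotient_map x"] by simp
    then show "holds j \<psi>"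
      using H xj s by simp
  qed (use s \<psi> in simp_all)
  then show ?thesis
    using s by simp
qed

lemma quotient_map_epi:
  assumes h: "Cod h = Y" "Cod h' = Y" "Dom h = Dom c" "Dom h' = Dom c"
    and eq: "cmp h quotient_map = cmp h' quotient_map"
  shows "h = h'"
proof -
  have "Le (Dom (Idm (Dom c))) (Top (Dom (Idm (Dom c)))) (rx (pr h h') (delta T Y))"
  proof (rule quotient_map_covers)
    fix j a assume ja: "Cod j = Dom (Idm (Dom c))" "Cod a = A" "Dom a = Dom j"
      "cmp (Idm (Dom c)) j = cmp quotient_map a"
    then have "cmp h j = cmp h' j"
      using h cmp_assoc[of a quotient_map h] cmp_assoc[of a quotient_map h'] by (simp add: eq)
    then show "holds j (rx (pr h h') (delta T Y))"
      using ja h by (simp add: holds_rx_delta)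
  qed (use h in simp_all)
  then show ?thesis
    using h eq_iff_Top_le_delta[of h h' Y] by simp
qed

end

section \<open>Maps respecting the equivalence factor through the quotient\<close>

locale respecting_map = class_comprehension +
  fixes f
  assumes f_dom [simp]: "Dom f = A"
    and respects: "Le (prd A A) \<rho> (rx (cross T f f) (delta T (Cod f)))"
begin

abbreviation "X \<equiv> Dom c"
abbreviation "Y \<equiv> Cod f"

lemma f_respects:
  assumes ab: "Cod a = A" "Cod b = A" "Dom a = Dom b"
    and "cmp quotient_map a = cmp quotient_map b"
  shows "cmp f a = cmp f b"
proof -
  have "holds (pr a b) \<rho>"
    using assms rho_iff_quotient_map by simp
  then have "holds (pr a b) (rx (cross T f f) (delta T Y))"
    using ab by (intro holds_mono[OF respects, of "pr a b"]) (simp_all add: cross_eq)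
  then show ?thesis
    using ab by (simp add: cross_eq holds_rx holds_delta)
qed

text \<open>The graph of the induced map \<open>X \<rightarrow> Y\<close>: the pairs \<open>(s, y)\<close> with
  \<open>\<exists>a. quotient_map a = s \<and> f a = y\<close>.\<close>

definition graph_witness where
  "graph_witness = Meet (prd A (prd X Y))
     (rx (pr (cmp quotient_map (p1 A (prd X Y))) (cmp (p1 X Y) (p2 A (prd X Y)))) (delta T X))
     (rx (pr (cmp f (p1 A (prd X Y))) (cmp (p2 X Y) (p2 A (prd X Y)))) (delta T Y))"

definition graph where
  "graph = ex (p2 A (prd X Y)) graph_witness"

lemma graph_witness_P [simp]: "graph_witness \<in> PP (prd A (prd X Y))"
  and graph_P [simp]: "graph \<in> PP (prd X Y)"
  unfolding graph_def graph_witness_def by simp_all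

lemma holds_graph_witness:
  assumes "Cod a = A" "Cod s = X" "Cod y = Y" "Dom a = Dom s" "Dom s = Dom y"
  shows "holds (pr a (pr s y)) graph_witness \<longleftrightarrow> cmp quotient_map a = s \<and> cmp f a = y"
  using assms unfolding graph_witness_def by (simp add: holds_rx holds_delta)

lemma graph_intro:
  assumes "Cod a = A" "Cod s = X" "Cod y = Y" "Dom a = Dom s" "Dom s = Dom y"
    and "cmp quotient_map a = s" "cmp f a = y"
  shows "holds (pr s y) graph"
  unfolding graph_def
  by (rule holds_ex_intro[where w = "pr a (pr s y)"]) (use assms holds_graph_witness in simp_all)

lemma graph_elim:
  assumes sy: "holds (pr s y) graph" "Cod s = X" "Cod y = Y" "Dom s = Dom y" and \<psi>: "\<psi> \<in> PP (Dom s)"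
    and H: "\<And>a j. Cod a = A \<Longrightarrow> Cod j = Dom s \<Longrightarrow> Dom a = Dom j \<Longrightarrow>
      cmp quotient_map a = cmp s j \<Longrightarrow> cmp f a = cmp y j \<Longrightarrow> holds j \<psi>"
  shows "Le (Dom s) (Top (Dom s)) \<psi>"
proof -
  have "Le (Dom (pr s y)) (Top (Dom (pr s y))) \<psi>"
  proof (rule holds_ex_p2_elim[OF sy(1)[unfolded graph_def]])
    fix a j assume aj: "Cod a = A" "Cod j = Dom (pr s y)" "Dom a = Dom j"
      and "holds (pr a (cmp (pr s y) j)) graph_witness"
    then show "holds j \<psi>"
      using sy H holds_graph_witness[of a "cmp s j" "cmp y j"] by simp
  qed (use sy \<psi> in simp_all)
  then show ?thesis
    using sy by simp
qed

lemma graph_single_valued: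
  assumes sy: "Cod s = X" "Cod y = Y" "Cod y' = Y" "Dom s = Dom y" "Dom s = Dom y'"
    and graph_y: "holds (pr s y) graph" and graph_y': "holds (pr s y') graph"
  shows "y = y'"
proof -
  have "Le (Dom s) (Top (Dom s)) (rx (pr y y') (delta T Y))"
  proof (rule graph_elim[OF graph_y])
    fix a j assume aj: "Cod a = A" "Cod j = Dom s" "Dom a = Dom j"
      "cmp quotient_map a = cmp s j" "cmp f a = cmp y j"
    have "holds (pr (cmp s j) (cmp y' j)) graph"
      using holds_cmp[OF graph_y', of j] sy aj by simp
    then have "Le (Dom (cmp s j)) (Top (Dom (cmp s j))) (rx (pr (cmp y j) (cmp y' j)) (delta T Y))"
    proof (rule graph_elim)
      fix a' j' assume a'j': "Cod a' = A" "Cod j' = Dom (cmp s j)" "Dom a' = Dom j'"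
        "cmp quotient_map a' = cmp (cmp s j) j'" "cmp f a' = cmp (cmp y' j) j'"
      have "cmp quotient_map (cmp a j') = cmp quotient_map a'"
        using aj a'j' sy cmp_assoc[of j' a quotient_map] by simp
      then have "cmp f (cmp a j') = cmp f a'"
        using aj a'j' sy by (intro f_respects) simp_all
      then have "cmp (cmp y j) j' = cmp (cmp y' j) j'"
        using aj a'j' sy cmp_assoc[of j' a f] by simp
      then show "holds j' (rx (pr (cmp y j) (cmp y' j)) (delta T Y))"
        using aj a'j' sy by (simp add: holds_rx_delta)
    qed (use sy aj in simp_all)
    then have "cmp y j = cmp y' j"
      using aj sy eq_iff_Top_le_delta[of "cmp y j" "cmp y' j" Y] by simp
    then show "holds j (rx (pr y y') (delta T Y))"
      using aj sy by (simp add: holds_rx_delta)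
  qed (use sy in simp_all)
  then have "Le (Dom y) (Top (Dom y)) (rx (pr y y') (delta T Y))"
    using sy(4) by simp
  moreover have "Dom y = Dom y'"
    using sy(4,5) by simp
  ultimately show ?thesis
    using eq_iff_Top_le_delta[of y y' Y] sy(2,3) by blast
qed

lemma graph_total: "Le X (Top X) (ex (p1 X Y) graph)"
proof -
  have "Le (Dom (Idm X)) (Top (Dom (Idm X))) (ex (p1 X Y) graph)"
  proof (rule quotient_map_covers)
    fix j a assume ja: "Cod j = Dom (Idm X)" "Cod a = A" "Dom a = Dom j"
      "cmp (Idm X) j = cmp quotient_map a"
    have "holds (pr j (cmp f a)) graph"
      using ja by (intro graph_intro[of a]) simp_all
    then show "holds j (ex (p1 X Y) graph)"
      using ja by (intro holds_ex_intro[where w = "pr j (cmp f a)"]) simp_all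
  qed simp_all
  then show ?thesis
    by simp
qed

lemma graph_functional:
  "Le (prd3 T X Y Y)
     (Meet (prd3 T X Y Y) (rx (pr (q1 T X Y Y) (q2 T X Y Y)) graph)
        (rx (pr (q1 T X Y Y) (q3 T X Y Y)) graph))
     (rx (pr (q2 T X Y Y) (q3 T X Y Y)) (delta T Y))"
proof (rule le_if_holds)
  fix k assume k: "Cod k = prd3 T X Y Y"
    and hk: "holds k (Meet (prd3 T X Y Y) (rx (pr (q1 T X Y Y) (q2 T X Y Y)) graph)
      (rx (pr (q1 T X Y Y) (q3 T X Y Y)) graph))"
  define s y y' where "s = cmp (q1 T X Y Y) k" and "y = cmp (q2 T X Y Y) k"
    and "y' = cmp (q3 T X Y Y) k"
  have sy: "Cod s = X" "Cod y = Y" "Cod y' = Y" "Dom s = Dom y" "Dom s = Dom y'"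
    using k unfolding s_def y_def y'_def by (simp_all add: triple_defs)
  have k_eq: "k = pr (pr s y) y'"
    using k unfolding s_def y_def y'_def triple_defs by simp
  have "holds (pr s y) graph" "holds (pr s y') graph"
    using hk sy unfolding k_eq by (simp_all add: holds_rx holds_rx_pr triple_defs)
  then have "y = y'"
    using sy graph_single_valued by blast
  then show "holds k (rx (pr (q2 T X Y Y) (q3 T X Y Y)) (delta T Y))"
    using sy unfolding k_eq by (simp add: holds_rx holds_rx_pr holds_delta triple_defs)
qed (simp_all add: triple_defs)

lemma factorization:
  assumes "cauchy_complete T"
  shows "\<exists>h. hom T h X Y \<and> cmp h quotient_map = f"
proof -
  obtain h where h: "hom T h X Y" "graph = rx (cross T h (Idm Y)) (delta T Y)"
    using assms graph_P graph_total graph_functional unfolding cauchy_complete_def by blast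
  have "holds (pr quotient_map f) graph"
    by (rule graph_intro[of "Idm A"]) simp_all
  then have "holds (pr (cmp h quotient_map) f) (delta T Y)"
    using h unfolding hom_def by (simp add: holds_rx cross_eq)
  then have "cmp h quotient_map = f"
    using h unfolding hom_def by (simp add: holds_delta)
  with h(1) show ?thesis
    by blast
qed

end

context class_comprehension
begin

lemma effective_quotient_quotient_map:
  assumes "cauchy_complete T"
  shows "effective_quotient T A \<rho> quotient_map"
  unfolding effective_quotient_def
proof (intro conjI allI impI)
  show "\<rho> = rx (cross T quotient_map quotient_map) (delta T (Cod quotient_map))"
    using rho_eq_kernel by simp
  fix f assume f: "Dom f = A" "Le (prd A A) \<rho> (rx (cross T f f) (delta T (Cod f)))"
  interpret respecting_map T A PA m \<rho> c f
    using f by unfold_locales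
  obtain h where h: "hom T h (Dom c) (Cod f)" "cmp h quotient_map = f"
    using factorization[OF assms] by blast
  show "\<exists>!h. hom T h (Cod quotient_map) (Cod f) \<and> cmp h quotient_map = f"
  proof (rule ex1I)
    show "hom T h (Cod quotient_map) (Cod f) \<and> cmp h quotient_map = f"
      using h by simp
    fix h' assume "hom T h' (Cod quotient_map) (Cod f) \<and> cmp h' quotient_map = f"
    then show "h' = h"
      using h quotient_map_epi[of h' "Cod f" h] unfolding hom_def by simp
  qed
qed simp

end

theorem mainTheorem9:
  fixes T :: "('o, 'm, 'p) tripos_data"
  assumes "is_tripos T"
    and "extensional T"
    and "cauchy_complete T"
    and "has_full_comprehensions T"
    and "has_strong_power_objects T"
  shows "has_effective_quotients T \<and>
    (\<forall>A PA m \<rho> c. strong_power T A PA m \<longrightarrow> equiv_rel T A \<rho> \<longrightarrow>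
        full_comprehension T PA (class_formula T A PA m \<rho>) c \<longrightarrow>
        (\<exists>q. effective_quotient T A \<rho> q \<and> t_cod T q = t_dom T c))"
proof -
  interpret comprehensive_tripos T
    using assms(1,4) by unfold_locales
  interpret extensional_tripos T
    using assms(1,2) by unfold_locales
  have quotient: "\<exists>q. effective_quotient T A \<rho> q \<and> Cod q = Dom c"
    if "strong_power T A PA m" "equiv_rel T A \<rho>"
      "full_comprehension T PA (class_formula T A PA m \<rho>) c" for A PA m \<rho> c
  proof -
    interpret class_comprehension T A PA m \<rho> c
      using that by unfold_locales
    show ?thesis
      using effective_quotient_quotient_map[OF assms(3)] by auto
  qed
  moreover have "\<exists>c. full_comprehension T PA (class_formula T A PA m \<rho>) c"
    if "strong_power T A PA m" "equiv_rel T A \<rho>" for A PA m \<rho>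
  proof -
    interpret equivalence_setting T A PA m \<rho>
      using that by unfold_locales
    show ?thesis
      using has_full_comprehensions unfolding has_full_comprehensions_def by simp
  qed
  ultimately show ?thesis
    using assms(5) unfolding has_effective_quotients_def has_strong_power_objects_def by meson
qed

end
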